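(* Let $n,m\ge1$. Let $A\in\mathbb{R}^{n\times nm}$ and $C\in\mathbb{R}^{m\times nm}$ be random matrices. Let $D\in\mathbb{R}^{nm\times nm}$ be a fixed diagonal matrix with all diagonal entries nonzero, and let $w\in\mathbb{R}^{nm}$ be a fixed nonzero vector. Set $B=(AD)\odot C\in\mathbb{R}^{nm\times nm}$. Then, with probability $1$, $B$ is invertible and, for every $i\in[nm]$, $\langle (B^{-1})_i,w\rangle\neq0$, where $(B^{-1})_i$ denotes the $i$-th row of $B^{-1}$.
   Context: "Random" matrices have independent, identically distributed entries drawn from a continuous distribution, independently of each other. For $A\in\mathbb{R}^{n\times N}$ and $C\in\mathbb{R}^{m\times N}$, the Khatri–Rao product $A\odot C\in\mathbb{R}^{nm\times N}$ is the matrix whose $k$-th column is the Kronecker product $A_k\otimes C_k$ of the $k$-th columns of $A$ and $C$. *)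

theory Defs
  imports "HOL-Analysis.Analysis" "HOL-Probability.Probability"
begin

text \<open>Khatri--Rao product: column k of the result is the Kronecker product of
  column k of A and column k of C; the row index (i,j) (lexicographic order on
  pairs) corresponds to the row (i-1)m + j of the Kronecker product.\<close>
definition khatri_rao :: "real^'k^'n \<Rightarrow> real^'k^'m \<Rightarrow> real^'k^('n \<times> 'm)" where
  "khatri_rao A C = (\<chi> p k. A $ fst p $ k * C $ snd p $ k)"

definition diagonal_mat :: "real^'k^'k \<Rightarrow> bool" where
  "diagonal_mat D \<longleftrightarrow> (\<forall>i j. i \<noteq> j \<longrightarrow> D $ i $ j = 0)"

end

theory Submission
  imports Defs
begin

text \<open>Every entry of \<open>B\<close> is a product of distinct entries of \<open>A\<close> and \<open>C\<close>, so \<open>det B\<close> and,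
  for each \<open>r\<close>, the determinant of \<open>B\<close> with column \<open>r\<close> replaced by \<open>w\<close> are affine in each
  entry separately. A function of independent atomless coordinates that is affine in each
  coordinate and not identically zero vanishes only on a null set: by Fubini, integrate out one
  coordinate, on whose fibre the function is a non-trivial affine function of one variable
  with at most one root. Suitable scaled permutation matrices show that neither determinant
  vanishes identically, and by Cramer's rule the two determinants being nonzero is exactly
  the claim.\<close>

definition coord_affine :: "(('i \<Rightarrow> real) \<Rightarrow> real) \<Rightarrow> bool" where
  "coord_affine F \<longleftrightarrow>
     (\<forall>x p t. F (x(p := t)) = F (x(p := 0)) + t * (F (x(p := 1)) - F (x(p := 0))))"

lemma coord_affineD:
  "coord_affine F \<Longrightarrow> F (x(p := t)) = F (x(p := 0)) + t * (F (x(p := 1)) - F (x(p := 0)))"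
  unfolding coord_affine_def by blast

lemma coord_affine_const: "coord_affine (\<lambda>_. c)"
  by (simp add: coord_affine_def)

lemma coord_affine_diff:
  assumes "coord_affine F" and "coord_affine G"
  shows "coord_affine (\<lambda>x. F x - G x)"
  unfolding coord_affine_def
proof (intro allI)
  fix x p t
  show "F (x(p := t)) - G (x(p := t)) = F (x(p := 0)) - G (x(p := 0)) +
      t * (F (x(p := 1)) - G (x(p := 1)) - (F (x(p := 0)) - G (x(p := 0))))"
    using coord_affineD[OF assms(1), of x p t] coord_affineD[OF assms(2), of x p t]
    by (simp add: algebra_simps)
qed

lemma coord_affine_fun_upd:
  assumes "coord_affine F"
  shows "coord_affine (\<lambda>x. F (x(j := c)))"
  unfolding coord_affine_def
proof (intro allI)
  fix x p t
  show "F ((x(p := t))(j := c)) =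
        F ((x(p := 0))(j := c)) + t * (F ((x(p := 1))(j := c)) - F ((x(p := 0))(j := c)))"
  proof (cases "p = j")
    case False
    then have "(x(p := s))(j := c) = (x(j := c))(p := s)" for s
      by (rule fun_upd_twist)
    then show ?thesis using coord_affineD[OF assms, of "x(j := c)" p t] by simp
  qed simp
qed

lemma measurable_fun_upd_PiM:
  assumes "\<And>i. sets (\<mu> i) = sets (borel :: real measure)"
  shows "(\<lambda>x. x(j := c)) \<in> measurable (PiM S \<mu>) (PiM (insert j S) \<mu>)"
proof -
  have space: "space (\<mu> i) = UNIV" for i
    using sets_eq_imp_space_eq[OF assms] by simp
  have "(\<lambda>x i. (x(j := c)) i) \<in> measurable (PiM S \<mu>) (PiM (insert j S) \<mu>)"
  proof (rule measurable_PiM_single')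
    fix i assume "i \<in> insert j S"
    then show "(\<lambda>x. (x(j := c)) i) \<in> measurable (PiM S \<mu>) (\<mu> i)"
      by (cases "i = j") (auto simp: space)
  qed (auto simp: space_PiM PiE_def extensional_def space)
  then show ?thesis by (simp add: fun_upd_def)
qed

lemma AE_affine_nonzero:
  assumes sets: "sets \<mu> = sets borel" and atomless: "\<And>t. emeasure \<mu> {t} = 0"
    and nontrivial: "a \<noteq> 0 \<or> b \<noteq> 0"
  shows "AE y in \<mu>. a + y * b \<noteq> (0::real)"
proof (cases "b = 0")
  case False
  have "{-a / b} \<in> null_sets \<mu>" using atomless sets by (simp add: null_sets_def)
  moreover have "{y \<in> space \<mu>. \<not> a + y * b \<noteq> 0} \<subseteq> {-a / b}"
    using False by (auto simp: field_simps)
  ultimately show ?thesis by (rule AE_I')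
qed (use nontrivial in simp)

text \<open>The hypothesis that \<open>F\<close> depends only on the coordinates in \<open>S\<close> is what lets the
  induction on \<open>S\<close> integrate out one coordinate at a time.\<close>

lemma AE_PiM_nonzero_if_coord_affine:
  fixes \<mu> :: "'i \<Rightarrow> real measure"
  assumes "finite S"
    and prob: "\<And>i. prob_space (\<mu> i)" and sets: "\<And>i. sets (\<mu> i) = sets borel"
    and atomless: "\<And>i t. emeasure (\<mu> i) {t} = 0"
    and "coord_affine F" and "\<And>x y. (\<And>i. i \<in> S \<Longrightarrow> x i = y i) \<Longrightarrow> F x = F y"
    and "F \<in> borel_measurable (PiM S \<mu>)" and "\<exists>x. F x \<noteq> 0"
  shows "AE x in PiM S \<mu>. F x \<noteq> 0"
  using \<open>finite S\<close> assms(5-8)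
proof (induction S arbitrary: F rule: finite_induct)
  case empty
  then obtain x0 where "F x0 \<noteq> 0" by blast
  moreover have "F x = F x0" for x by (rule empty.prems(2)) simp
  ultimately show ?case by (intro AE_I2) metis
next
  case (insert j S F)
  note affine = insert.prems(1) and only_S = insert.prems(2) and measurable = insert.prems(3)
  define a where "a x = F (x(j := 0))" for x
  define b where "b x = F (x(j := 1)) - F (x(j := 0))" for x
  have F_ab: "F x = a x + x j * b x" for x
    using coord_affineD[OF affine, of x j "x j"] unfolding fun_upd_triv a_def b_def .
  have affine_a: "coord_affine a" and affine_b: "coord_affine b"
    unfolding a_def b_def by (intro coord_affine_fun_upd coord_affine_diff affine)+
  have local_upd: "F (x(j := c)) = F (y(j := c))" if "\<And>i. i \<in> S \<Longrightarrow> x i = y i" for x y c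
    using that by (intro only_S) auto
  have local_a: "a x = a y" if "\<And>i. i \<in> S \<Longrightarrow> x i = y i" for x y
    unfolding a_def using local_upd[OF that] by simp
  have local_b: "b x = b y" if "\<And>i. i \<in> S \<Longrightarrow> x i = y i" for x y
    unfolding b_def using local_upd[OF that] by simp
  have measurable_a: "a \<in> borel_measurable (PiM S \<mu>)"
    and measurable_b: "b \<in> borel_measurable (PiM S \<mu>)"
    unfolding a_def b_def
    by (intro borel_measurable_diff measurable_compose[OF measurable_fun_upd_PiM[OF sets] measurable])+
  have AE_ab: "AE x in PiM S \<mu>. a x \<noteq> 0 \<or> b x \<noteq> 0"
  proof (cases "\<exists>x. b x \<noteq> 0")
    case True
    have "AE x in PiM S \<mu>. b x \<noteq> 0"
      by (rule insert.IH[OF affine_b local_b measurable_b True])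
    then show ?thesis by eventually_elim simp
  next
    case False
    obtain x where "F x \<noteq> 0" using insert.prems(4) by blast
    then have "\<exists>x. a x \<noteq> 0" using False F_ab by auto
    have "AE x in PiM S \<mu>. a x \<noteq> 0"
      by (rule insert.IH[OF affine_a local_a measurable_a \<open>\<exists>x. a x \<noteq> 0\<close>])
    then show ?thesis by eventually_elim simp
  qed
  interpret product_sigma_finite \<mu>
    unfolding product_sigma_finite_def using prob prob_space_imp_sigma_finite by blast
  define Z where "Z = {x \<in> space (PiM (insert j S) \<mu>). F x = 0}"
  have "Z = F -` {0} \<inter> space (PiM (insert j S) \<mu>)" unfolding Z_def by auto
  then have Z_sets: "Z \<in> sets (PiM (insert j S) \<mu>)"
    using measurable_sets[OF measurable] by simp
  have fibre_null: "(\<integral>\<^sup>+ y. indicator Z (x(j := y)) \<partial>\<mu> j) = 0"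
    if x: "x \<in> space (PiM S \<mu>)" and ab: "a x \<noteq> 0 \<or> b x \<noteq> 0" for x
  proof -
    have fibre: "F (x(j := y)) = a x + y * b x" for y
      using F_ab[of "x(j := y)"] by (simp add: a_def b_def)
    have "AE y in \<mu> j. indicator Z (x(j := y)) = (0 :: ennreal)"
      using AE_affine_nonzero[OF sets atomless ab]
      by eventually_elim (simp add: Z_def fibre)
    from nn_integral_cong_AE[OF this] show ?thesis by simp
  qed
  have "emeasure (PiM (insert j S) \<mu>) Z = (\<integral>\<^sup>+ x. indicator Z x \<partial>PiM (insert j S) \<mu>)"
    using Z_sets by simp
  also have "\<dots> = (\<integral>\<^sup>+ x. (\<integral>\<^sup>+ y. indicator Z (x(j := y)) \<partial>\<mu> j) \<partial>PiM S \<mu>)"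
    by (rule product_nn_integral_insert) (use insert.hyps Z_sets in auto)
  also have "\<dots> = (\<integral>\<^sup>+ x. 0 \<partial>PiM S \<mu>)"
    by (rule nn_integral_cong_AE) (use AE_ab fibre_null in auto)
  finally show ?case
    using AE_iff_measurable[OF Z_sets] Z_def by auto
qed

lemma det_affine_in_column:
  fixes f :: "real \<Rightarrow> real^'k::finite^'k"
  assumes other: "\<And>t i j. j \<noteq> k \<Longrightarrow> f t $ i $ j = f 0 $ i $ j"
    and column: "\<And>t i. f t $ i $ k = f 0 $ i $ k + t * (f 1 $ i $ k - f 0 $ i $ k)"
  shows "det (f t) = det (f 0) + t * (det (f 1) - det (f 0))"
proof -
  define T0 where "T0 = transpose (f 0)"
  define V where "V = transpose (f 1) - transpose (f 0)"
  have transpose_f: "transpose (f s) = (\<chi> i. if i = k then T0 $ i + s *s V $ i else T0 $ i)" for s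
  proof -
    have "transpose (f s) $ a $ b = (\<chi> i. if i = k then T0 $ i + s *s V $ i else T0 $ i) $ a $ b"
      for a b
    proof (cases "a = k")
      case True
      with column[of s b] show ?thesis
        by (simp add: T0_def V_def transpose_def right_diff_distrib)
    next
      case False
      with other[of a s b] show ?thesis by (simp add: T0_def transpose_def)
    qed
    then show ?thesis by (simp add: vec_eq_iff)
  qed
  define E where "E = det ((\<chi> i. if i = k then V $ i else T0 $ i) :: real^'k^'k)"
  have "det (f s) = det (f 0) + s * E" for s
  proof -
    have "det (f s) = det (transpose (f s))" by (simp add: det_transpose)
    also have "\<dots> = det ((\<chi> i. if i = k then T0 $ i else T0 $ i) :: real^'k^'k)
        + det ((\<chi> i. if i = k then s *s V $ i else T0 $ i) :: real^'k^'k)"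
      unfolding transpose_f by (rule det_row_add)
    also have "\<dots> = det T0 + s * E"
      by (simp add: E_def det_row_mul)
    finally show ?thesis by (simp add: T0_def det_transpose)
  qed
  from this[of t] this[of 1] show ?thesis by simp
qed

definition column_local :: "(('i \<Rightarrow> real) \<Rightarrow> real^'c^'r) \<Rightarrow> ('i \<Rightarrow> 'c) \<Rightarrow> bool" where
  "column_local M col \<longleftrightarrow>
     (\<forall>x p t i j. j \<noteq> col p \<longrightarrow> M (x(p := t)) $ i $ j = M (x(p := 0)) $ i $ j)"

lemma coord_affine_det:
  fixes M :: "('i \<Rightarrow> real) \<Rightarrow> real^'k::finite^'k"
  assumes entries: "\<And>i j. coord_affine (\<lambda>x. M x $ i $ j)" and "column_local M col"
  shows "coord_affine (\<lambda>x. det (M x))"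
  unfolding coord_affine_def
proof (intro allI)
  fix x p t
  show "det (M (x(p := t))) =
      det (M (x(p := 0))) + t * (det (M (x(p := 1))) - det (M (x(p := 0))))"
  proof (rule det_affine_in_column[where k = "col p" and f = "\<lambda>t. M (x(p := t))"])
    show "M (x(p := s)) $ i $ j = M (x(p := 0)) $ i $ j" if "j \<noteq> col p" for s i j
      using \<open>column_local M col\<close> that unfolding column_local_def by blast
    show "M (x(p := s)) $ i $ col p =
        M (x(p := 0)) $ i $ col p + s * (M (x(p := 1)) $ i $ col p - M (x(p := 0)) $ i $ col p)"
      for s i
      by (rule coord_affineD[OF entries])
  qed
qed

definition replace_col :: "real^'c^'r \<Rightarrow> 'c \<Rightarrow> real^'r \<Rightarrow> real^'c^'r" where
  "replace_col A k v = (\<chi> i j. if j = k then v $ i else A $ i $ j)"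

lemma coord_affine_replace_col:
  assumes "\<And>i j. coord_affine (\<lambda>x. M x $ i $ j)"
  shows "coord_affine (\<lambda>x. replace_col (M x) k v $ i $ j)"
  unfolding replace_col_def by (cases "j = k") (simp_all add: assms coord_affine_const)

lemma column_local_replace_col:
  assumes "column_local M col"
  shows "column_local (\<lambda>x. replace_col (M x) k v) col"
  unfolding column_local_def
proof (intro allI impI)
  fix x p t i j
  assume "j \<noteq> col p"
  with assms have "M (x(p := t)) $ i $ j = M (x(p := 0)) $ i $ j"
    unfolding column_local_def by blast
  then show "replace_col (M (x(p := t))) k v $ i $ j = replace_col (M (x(p := 0))) k v $ i $ j"
    by (simp add: replace_col_def)
qed

lemma borel_measurable_replace_col:
  assumes "\<And>i j. (\<lambda>x. M x $ i $ j) \<in> borel_measurable N"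
  shows "(\<lambda>x. replace_col (M x) k v $ i $ j) \<in> borel_measurable N"
  unfolding replace_col_def by (cases "j = k") (simp_all add: assms)

lemma borel_measurable_det:
  fixes M :: "'a \<Rightarrow> real^'k::finite^'k"
  assumes "\<And>i j. (\<lambda>x. M x $ i $ j) \<in> borel_measurable N"
  shows "(\<lambda>x. det (M x)) \<in> borel_measurable N"
  unfolding det_def
  by (intro borel_measurable_sum borel_measurable_times measurable_const borel_measurable_prod assms)
    simp_all

lemma matrix_mul_matrix_inv:
  fixes A :: "'a::semiring_1^'k^'k"
  assumes "invertible A"
  shows "A ** matrix_inv A = mat 1"
  using assms unfolding invertible_def matrix_inv_def by (rule someI2_ex) auto

lemma matrix_inv_row_inner_nonzero:
  fixes A :: "real^'k::finite^'k"
  assumes "det A \<noteq> 0" and "det (replace_col A r w) \<noteq> 0"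
  shows "matrix_inv A $ r \<bullet> w \<noteq> 0"
proof -
  have "A ** matrix_inv A = mat 1"
    using assms(1) by (simp add: invertible_det_nz matrix_mul_matrix_inv)
  then have solution: "A *v (matrix_inv A *v w) = w"
    by (simp add: matrix_vector_mul_assoc)
  have "det (replace_col A r w) = (matrix_inv A *v w) $ r * det A"
    using cramer_lemma[of r A "matrix_inv A *v w"] unfolding solution replace_col_def .
  then have "(matrix_inv A *v w) $ r \<noteq> 0" using assms(2) by auto
  then show ?thesis by (simp add: matrix_vector_mult_def inner_vec_def)
qed

lemma scaled_permutation_det:
  fixes B :: "real^'k::finite^'k"
  assumes "inj \<pi>" and B: "\<And>a k. B $ a $ k = (if a = \<pi> k then d k else 0)"
    and d: "\<And>k. d k \<noteq> 0"
  shows "det B \<noteq> 0" and "det (replace_col B r w) = w $ \<pi> r / d r * det B"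
proof -
  have B_mult: "(B *v v) $ \<pi> k = d k * v $ k" for v k
  proof -
    have "(B *v v) $ \<pi> k = (\<Sum>l\<in>UNIV. (if k = l then d l else 0) * v $ l)"
      unfolding matrix_vector_mult_def by (simp add: B inj_eq[OF \<open>inj \<pi>\<close>])
    also have "\<dots> = (\<Sum>l\<in>UNIV. if k = l then d k * v $ k else 0)"
      by (rule sum.cong) auto
    finally show ?thesis by simp
  qed
  have "\<forall>v. B *v v = 0 \<longrightarrow> v = 0"
  proof (intro allI impI)
    fix v :: "real^'k"
    assume "B *v v = 0"
    then have "d k * v $ k = 0" for k using B_mult[of v k] by simp
    then show "v = 0" using d by (simp add: vec_eq_iff)
  qed
  then show det_B: "det B \<noteq> 0"
    by (simp add: invertible_det_nz[symmetric] invertible_left_inverse matrix_left_invertible_ker)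
  have "surj \<pi>" using \<open>inj \<pi>\<close> by (simp add: finite_UNIV_inj_surj)
  define y where "y = (\<chi> k. w $ \<pi> k / d k)"
  have "(B *v y) $ \<pi> k = w $ \<pi> k" for k
    using B_mult[of y k] d[of k] by (simp add: y_def)
  moreover have "\<exists>k. a = \<pi> k" for a using \<open>surj \<pi>\<close> by (rule surjD)
  ultimately have solution: "B *v y = w" by (metis vec_eq_iff)
  show "det (replace_col B r w) = w $ \<pi> r / d r * det B"
    using cramer_lemma[of r B y] unfolding solution replace_col_def by (simp add: y_def)
qed

definition kr_matrix ::
    "real^('n::finite \<times> 'm::finite)^('n \<times> 'm) \<Rightarrow> (('n \<times> ('n \<times> 'm)) + ('m \<times> ('n \<times> 'm)) \<Rightarrow> real)
      \<Rightarrow> real^('n \<times> 'm)^('n \<times> 'm)" where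
  "kr_matrix D x = khatri_rao
     (((\<chi> i k. x (Inl (i, k))) :: real^('n \<times> 'm)^'n) ** D) ((\<chi> j k. x (Inr (j, k))) :: real^('n \<times> 'm)^'m)"

lemma kr_matrix_entry:
  assumes "diagonal_mat D"
  shows "kr_matrix D x $ a $ k = x (Inl (fst a, k)) * D $ k $ k * x (Inr (snd a, k))"
proof -
  have "D $ l $ k = 0" if "l \<noteq> k" for l
    using assms that unfolding diagonal_mat_def by blast
  then have "(\<Sum>l\<in>UNIV. x (Inl (fst a, l)) * D $ l $ k) =
      (\<Sum>l\<in>UNIV. if l = k then x (Inl (fst a, k)) * D $ k $ k else 0)"
    by (intro sum.cong) auto
  then show ?thesis by (simp add: kr_matrix_def khatri_rao_def matrix_matrix_mult_def)
qed

lemma coord_affine_kr_matrix_entry: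
  assumes "diagonal_mat D"
  shows "coord_affine (\<lambda>x. kr_matrix D x $ a $ k)"
  unfolding coord_affine_def kr_matrix_entry[OF assms] by (auto simp: algebra_simps)

lemma column_local_kr_matrix:
  assumes "diagonal_mat D"
  shows "column_local (kr_matrix D) (case_sum snd snd)"
  unfolding column_local_def kr_matrix_entry[OF assms] by (auto split: sum.split)

lemma borel_measurable_kr_matrix_entry:
  assumes "diagonal_mat D"
  shows "(\<lambda>x. kr_matrix D x $ a $ k) \<in> borel_measurable (PiM UNIV (\<lambda>_. borel))"
  unfolding kr_matrix_entry[OF assms]
  by (intro borel_measurable_times measurable_component_singleton measurable_const) simp_all

lemma kr_matrix_witness:
  assumes diagonal: "diagonal_mat D" and D_nz: "\<And>k. D $ k $ k \<noteq> 0" and "w \<noteq> 0"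
  shows "\<exists>x. det (kr_matrix D x) \<noteq> 0 \<and> det (replace_col (kr_matrix D x) r w) \<noteq> 0"
proof -
  obtain q where "w $ q \<noteq> 0" using \<open>w \<noteq> 0\<close> by (auto simp: vec_eq_iff)
  define \<pi> where "\<pi> k = (if k = r then q else if k = q then r else k)" for k
  have "inj \<pi>" unfolding inj_def \<pi>_def by auto
  define x :: "_ \<Rightarrow> real" where "x = case_sum (\<lambda>(i, k). if i = fst (\<pi> k) then 1 else 0)
                               (\<lambda>(j, k). if j = snd (\<pi> k) then 1 else 0)"
  have "kr_matrix D x $ a $ k = (if a = \<pi> k then D $ k $ k else 0)" for a k
    unfolding kr_matrix_entry[OF diagonal] x_def by (cases a; cases "\<pi> k") auto
  note permutation = scaled_permutation_det[OF \<open>inj \<pi>\<close> this D_nz]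
  have "det (replace_col (kr_matrix D x) r w) = w $ q / D $ r $ r * det (kr_matrix D x)"
    using permutation(2)[where r = r and w = w] by (simp add: \<pi>_def)
  with permutation(1) \<open>w $ q \<noteq> 0\<close> D_nz[of r] show ?thesis by auto
qed

lemma AE_kr_matrix_inv_row_inner_nonzero:
  fixes \<mu> :: "('n::finite \<times> ('n \<times> 'm::finite)) + ('m \<times> ('n \<times> 'm)) \<Rightarrow> real measure"
  assumes prob: "\<And>i. prob_space (\<mu> i)" and sets: "\<And>i. sets (\<mu> i) = sets borel"
    and atomless: "\<And>i t. emeasure (\<mu> i) {t} = 0"
    and diagonal: "diagonal_mat D" and D_nz: "\<And>k. D $ k $ k \<noteq> 0" and "w \<noteq> 0"
  shows "AE x in PiM UNIV \<mu>.
           invertible (kr_matrix D x) \<and> (\<forall>r. matrix_inv (kr_matrix D x) $ r \<bullet> w \<noteq> 0)"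
proof -
  have sets_PiM: "sets (PiM UNIV \<mu>) = sets (PiM UNIV (\<lambda>_. borel))"
    by (rule sets_PiM_cong) (simp_all add: sets)
  have nonzero: "AE x in PiM UNIV \<mu>. det (M x) \<noteq> 0"
    if "\<And>i j. coord_affine (\<lambda>x. M x $ i $ j)" "column_local M (case_sum snd snd)"
      "\<And>i j. (\<lambda>x. M x $ i $ j) \<in> borel_measurable (PiM UNIV (\<lambda>_. borel))" "\<exists>x. det (M x) \<noteq> 0"
    for M :: "_ \<Rightarrow> real^('n \<times> 'm)^('n \<times> 'm)"
  proof (rule AE_PiM_nonzero_if_coord_affine[OF finite prob sets atomless coord_affine_det])
    show "(\<lambda>x. det (M x)) \<in> borel_measurable (PiM UNIV \<mu>)"
      unfolding measurable_cong_sets[OF sets_PiM refl] by (rule borel_measurable_det) fact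
    show "det (M x) = det (M y)" if "\<And>i. i \<in> UNIV \<Longrightarrow> x i = y i" for x y
      using that by (metis ext UNIV_I)
  qed (use that in auto)
  have "AE x in PiM UNIV \<mu>. det (kr_matrix D x) \<noteq> 0"
    using kr_matrix_witness[OF diagonal D_nz \<open>w \<noteq> 0\<close>]
    by (intro nonzero coord_affine_kr_matrix_entry column_local_kr_matrix
        borel_measurable_kr_matrix_entry diagonal) blast
  moreover have "AE x in PiM UNIV \<mu>. det (replace_col (kr_matrix D x) r w) \<noteq> 0" for r
    using kr_matrix_witness[OF diagonal D_nz \<open>w \<noteq> 0\<close>, of r]
    by (intro nonzero coord_affine_replace_col coord_affine_kr_matrix_entry
        column_local_replace_col column_local_kr_matrix borel_measurable_replace_col
        borel_measurable_kr_matrix_entry diagonal) blast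
  then have "AE x in PiM UNIV \<mu>. \<forall>r. det (replace_col (kr_matrix D x) r w) \<noteq> 0"
    by (rule eventually_all_finite)
  ultimately show ?thesis
    by eventually_elim (simp add: invertible_det_nz matrix_inv_row_inner_nonzero)
qed

lemma (in prob_space) emeasure_distr_singleton:
  fixes X :: "'a \<Rightarrow> real"
  assumes "random_variable borel X" and "measure M {\<omega> \<in> space M. X \<omega> = t} = 0"
  shows "emeasure (distr M borel X) {t} = 0"
proof -
  have "emeasure (distr M borel X) {t} = emeasure M (X -` {t} \<inter> space M)"
    by (rule emeasure_distr[OF assms(1)]) simp
  also have "X -` {t} \<inter> space M = {\<omega> \<in> space M. X \<omega> = t}" by auto
  finally show ?thesis using assms(2) by (simp add: emeasure_eq_measure)
qed

lemma (in prob_space) AE_of_AE_PiM_distr: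
  assumes indep: "indep_vars (\<lambda>_. borel) X I" and "I \<noteq> {}"
    and "AE x in PiM I (\<lambda>i. distr M borel (X i)). P x"
  shows "AE \<omega> in M. P (\<lambda>i\<in>I. X i \<omega>)"
proof -
  have rv: "random_variable borel (X i)" if "i \<in> I" for i
    using indep that unfolding indep_vars_def2 by blast
  have distr_eq: "distr M (PiM I (\<lambda>_. borel)) (\<lambda>\<omega>. \<lambda>i\<in>I. X i \<omega>) = PiM I (\<lambda>i. distr M borel (X i))"
    by (rule indep_vars_iff_distr_eq_PiM'[THEN iffD1]) (use \<open>I \<noteq> {}\<close> rv indep in auto)
  from assms(3) have "AE x in distr M (PiM I (\<lambda>_. borel)) (\<lambda>\<omega>. \<lambda>i\<in>I. X i \<omega>). P x"
    unfolding distr_eq .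
  moreover have "(\<lambda>\<omega>. \<lambda>i\<in>I. X i \<omega>) \<in> measurable M (PiM I (\<lambda>_. borel))"
    using rv by (intro measurable_restrict) auto
  ultimately show ?thesis by (rule AE_distrD[rotated])
qed

theorem lemma4p2:
  fixes M :: "'w measure"
    and X :: "('n::finite \<times> ('n \<times> 'm::finite)) + ('m \<times> ('n \<times> 'm)) \<Rightarrow> 'w \<Rightarrow> real"
    and D :: "real^('n \<times> 'm)^('n \<times> 'm)"
    and w :: "real^('n \<times> 'm)"
  assumes "prob_space M"
    and indep: "prob_space.indep_vars M (\<lambda>_. borel) X UNIV"
    and identA: "\<And>p q. distr M borel (X (Inl p)) = distr M borel (X (Inl q))"
    and identC: "\<And>p q. distr M borel (X (Inr p)) = distr M borel (X (Inr q))"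
    and continuous: "\<And>p x. measure M {\<omega> \<in> space M. X p \<omega> = x} = 0"
    and D_diag: "diagonal_mat D"
    and D_nz: "\<And>k. D $ k $ k \<noteq> 0"
    and w_nz: "w \<noteq> 0"
  shows "AE \<omega> in M.
           (let A = (\<chi> i k. X (Inl (i, k)) \<omega>) :: real^('n \<times> 'm)^'n;
                C = (\<chi> j k. X (Inr (j, k)) \<omega>) :: real^('n \<times> 'm)^'m;
                B = khatri_rao (A ** D) C
            in invertible B \<and> (\<forall>r. matrix_inv B $ r \<bullet> w \<noteq> 0))"
proof -
  interpret prob_space M by fact
  have rv: "random_variable borel (X i)" for i
    using indep unfolding indep_vars_def2 by blast
  have "AE x in PiM UNIV (\<lambda>i. distr M borel (X i)).
          invertible (kr_matrix D x) \<and> (\<forall>r. matrix_inv (kr_matrix D x) $ r \<bullet> w \<noteq> 0)"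
    using rv continuous
    by (intro AE_kr_matrix_inv_row_inner_nonzero D_diag D_nz w_nz prob_space_distr
        emeasure_distr_singleton) simp_all
  from AE_of_AE_PiM_distr[OF indep UNIV_not_empty this]
  show ?thesis by (simp add: kr_matrix_def Let_def)
qed

end
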